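(* Under the standing assumptions, let $H$ and $L$ be wide subgroupoids of $\mathcal G$ such that $J_h\neq\{0\}$ for every $h\in H$ and $J_l\neq\{0\}$ for every $l\in L$. If $R^{\beta_H}=R^{\beta_L}$, then $H=L$.
   Context: All rings and algebras are associative and unital. A groupoid is a nonempty set $\mathcal G$ with a partially defined associative multiplication in which every $g$ has an inverse $g^{-1}$, a left identity $r(g)=gg^{-1}$ and a right identity $d(g)=g^{-1}g$; $gh$ is defined iff $d(g)=r(h)$; $\mathcal G_0$ is the set of identities. A subgroupoid is a nonempty subset closed under inverses and defined products; it is wide if it contains $\mathcal G_0$. Standing assumptions: $K$ commutative ring, $R$ a $K$-algebra, $\mathcal G$ a finite groupoid, $\beta=(\{E_g\},\{\beta_g\})$ a unital action of $\mathcal G$ on $R$: $E_g=E_{r(g)}$ is an ideal of $R$, unital with identity $1_g$ (so $1_{g^{-1}}=1_{d(g)}$), $\beta_g:E_{g^{-1}}\to E_g$ a $K$-algebra isomorphism, $\beta_e=\mathrm{id}_{E_e}$ for $e\in\mathcal G_0$, $\beta_g\beta_h(x)=\beta_{gh}(x)$ whenever $d(g)=r(h)$, $x\in E_{h^{-1}}$; $R=\bigoplus_{e\in\mathcal G_0}E_e$; and $R$ is a $\beta$-Galois extension of $R^\beta$: there exist $x_i,y_i\in R$ ($1\le i\le m$) with $\sum_i x_i\beta_g(y_i1_{g^{-1}})=1_g$ if $g\in\mathcal G_0$ and $=0$ otherwise. For a subgroupoid $H$, $R^{\beta_H}=\{r\in R:\beta_h(r1_{h^{-1}})=r1_h\ \forall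 h\in H\}$, and $R^\beta=R^{\beta_{\mathcal G}}$. For $g\in\mathcal G$, $J_g=\{r\in E_g: r\beta_g(x1_{g^{-1}})=xr\ \forall x\in R\}$. *)

theory Defs
  imports Main
begin

text \<open>A groupoid is given by a carrier G, a multiplication m (meaningful only when
  d g = r h) and an inversion i.  Range and domain are r g = g g^-1, d g = g^-1 g.\<close>

definition gr_r :: "('g \<Rightarrow> 'g \<Rightarrow> 'g) \<Rightarrow> ('g \<Rightarrow> 'g) \<Rightarrow> 'g \<Rightarrow> 'g" where
  "gr_r m i g = m g (i g)"

definition gr_d :: "('g \<Rightarrow> 'g \<Rightarrow> 'g) \<Rightarrow> ('g \<Rightarrow> 'g) \<Rightarrow> 'g \<Rightarrow> 'g" where
  "gr_d m i g = m (i g) g"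

definition groupoid :: "'g set \<Rightarrow> ('g \<Rightarrow> 'g \<Rightarrow> 'g) \<Rightarrow> ('g \<Rightarrow> 'g) \<Rightarrow> bool" where
  "groupoid G m i \<longleftrightarrow>
     G \<noteq> {} \<and>
     (\<forall>g\<in>G. i g \<in> G \<and> i (i g) = g) \<and>
     (\<forall>g\<in>G. \<forall>h\<in>G. gr_d m i g = gr_r m i h \<longrightarrow>
         m g h \<in> G \<and> gr_r m i (m g h) = gr_r m i g \<and> gr_d m i (m g h) = gr_d m i h) \<and>
     (\<forall>g\<in>G. \<forall>h\<in>G. \<forall>k\<in>G. gr_d m i g = gr_r m i h \<and> gr_d m i h = gr_r m i k \<longrightarrow>
         m (m g h) k = m g (m h k)) \<and>
     (\<forall>g\<in>G. m (gr_r m i g) g = g \<and> m g (gr_d m i g) = g) \<and>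
     (\<forall>g\<in>G. gr_r m i (gr_r m i g) = gr_r m i g \<and> gr_d m i (gr_r m i g) = gr_r m i g \<and>
            gr_r m i (gr_d m i g) = gr_d m i g \<and> gr_d m i (gr_d m i g) = gr_d m i g)"

definition gr_ids :: "'g set \<Rightarrow> ('g \<Rightarrow> 'g \<Rightarrow> 'g) \<Rightarrow> ('g \<Rightarrow> 'g) \<Rightarrow> 'g set" where
  "gr_ids G m i = gr_r m i ` G"

definition subgroupoid :: "'g set \<Rightarrow> 'g set \<Rightarrow> ('g \<Rightarrow> 'g \<Rightarrow> 'g) \<Rightarrow> ('g \<Rightarrow> 'g) \<Rightarrow> bool" where
  "subgroupoid H G m i \<longleftrightarrow> H \<noteq> {} \<and> H \<subseteq> G \<and> (\<forall>h\<in>H. i h \<in> H) \<and>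
     (\<forall>g\<in>H. \<forall>h\<in>H. gr_d m i g = gr_r m i h \<longrightarrow> m g h \<in> H)"

definition wide_subgroupoid :: "'g set \<Rightarrow> 'g set \<Rightarrow> ('g \<Rightarrow> 'g \<Rightarrow> 'g) \<Rightarrow> ('g \<Rightarrow> 'g) \<Rightarrow> bool" where
  "wide_subgroupoid H G m i \<longleftrightarrow> subgroupoid H G m i \<and> gr_ids G m i \<subseteq> H"

definition two_sided_ideal :: "'r::ring_1 set \<Rightarrow> bool" where
  "two_sided_ideal I \<longleftrightarrow> 0 \<in> I \<and> (\<forall>x\<in>I. \<forall>y\<in>I. x + y \<in> I) \<and> (\<forall>x\<in>I. - x \<in> I) \<and>
     (\<forall>x\<in>I. \<forall>a. a * x \<in> I \<and> x * a \<in> I)"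

definition is_unit_of :: "'r::ring_1 \<Rightarrow> 'r set \<Rightarrow> bool" where
  "is_unit_of u I \<longleftrightarrow> u \<in> I \<and> (\<forall>x\<in>I. u * x = x \<and> x * u = x)"

definition ring_iso_betw :: "('r::ring_1 \<Rightarrow> 'r) \<Rightarrow> 'r set \<Rightarrow> 'r set \<Rightarrow> bool" where
  "ring_iso_betw f A B \<longleftrightarrow> bij_betw f A B \<and>
     (\<forall>x\<in>A. \<forall>y\<in>A. f (x + y) = f x + f y \<and> f (x * y) = f x * f y)"

text \<open>Unital action beta = ({E_g}, {beta_g}) of G on R (R = the whole type 'r), with
  u g = 1_g the identity of E_g, together with R = direct sum of the E_e, e in G_0.\<close>
definition unital_action ::
  "'g set \<Rightarrow> ('g \<Rightarrow> 'g \<Rightarrow> 'g) \<Rightarrow> ('g \<Rightarrow> 'g) \<Rightarrow> ('g \<Rightarrow> 'r::ring_1 set) \<Rightarrow> ('g \<Rightarrow> 'r) \<Rightarrow>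
   ('g \<Rightarrow> 'r \<Rightarrow> 'r) \<Rightarrow> bool" where
  "unital_action G m i E u \<beta> \<longleftrightarrow>
     (\<forall>g\<in>G. E g = E (gr_r m i g)) \<and>
     (\<forall>g\<in>G. two_sided_ideal (E g)) \<and>
     (\<forall>g\<in>G. is_unit_of (u g) (E g)) \<and>
     (\<forall>g\<in>G. ring_iso_betw (\<beta> g) (E (i g)) (E g)) \<and>
     (\<forall>e\<in>gr_ids G m i. \<forall>x\<in>E e. \<beta> e x = x) \<and>
     (\<forall>g\<in>G. \<forall>h\<in>G. gr_d m i g = gr_r m i h \<longrightarrow>
        (\<forall>x\<in>E (i h). \<beta> g (\<beta> h x) = \<beta> (m g h) x)) \<and>
     (\<forall>x. \<exists>!f. (\<forall>e\<in>gr_ids G m i. f e \<in> E e) \<and> (\<forall>e. e \<notin> gr_ids G m i \<longrightarrow> f e = 0) \<and>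
            x = (\<Sum>e\<in>gr_ids G m i. f e))"

definition galois_ext ::
  "'g set \<Rightarrow> ('g \<Rightarrow> 'g \<Rightarrow> 'g) \<Rightarrow> ('g \<Rightarrow> 'g) \<Rightarrow> ('g \<Rightarrow> 'r::ring_1) \<Rightarrow> ('g \<Rightarrow> 'r \<Rightarrow> 'r) \<Rightarrow> bool" where
  "galois_ext G m i u \<beta> \<longleftrightarrow>
     (\<exists>(n::nat) (xs::nat \<Rightarrow> 'r) ys. \<forall>g\<in>G.
        (\<Sum>k<n. xs k * \<beta> g (ys k * u (i g))) = (if g \<in> gr_ids G m i then u g else 0))"

definition fixed_ring :: "'g set \<Rightarrow> ('g \<Rightarrow> 'g) \<Rightarrow> ('g \<Rightarrow> 'r::ring_1) \<Rightarrow> ('g \<Rightarrow> 'r \<Rightarrow> 'r) \<Rightarrow> 'r set" where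
  "fixed_ring H i u \<beta> = {x. \<forall>h\<in>H. \<beta> h (x * u (i h)) = x * u h}"

definition J_set :: "('g \<Rightarrow> 'r::ring_1 set) \<Rightarrow> ('g \<Rightarrow> 'g) \<Rightarrow> ('g \<Rightarrow> 'r) \<Rightarrow> ('g \<Rightarrow> 'r \<Rightarrow> 'r) \<Rightarrow> 'g \<Rightarrow> 'r set" where
  "J_set E i u \<beta> g = {x \<in> E g. \<forall>y. x * \<beta> g (y * u (i g)) = y * x}"

end

theory Submission
  imports Defs
begin

(* For a wide subgroupoid L the partial trace tr_L(y) = sum_{l in L} beta_l(y 1_{l^-1}) lies in
   R^{beta_L}.  If some g in H lies outside L, then g^-1 is not in L either, so no product g l
   with l in L is an identity, and the Galois coordinates x_k, y_k give
   sum_k x_k beta_g(tr_L(y_k) 1_{g^-1}) = 0.  But R^{beta_L} = R^{beta_H} turns the same sum into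
   (sum_k x_k tr_L(y_k)) 1_g = 1_g, and 1_g <> 0 because the nonzero ideal J_g lies in E_g. *)

locale groupoid_carrier =
  fixes G :: "'g set" and m :: "'g \<Rightarrow> 'g \<Rightarrow> 'g" and i :: "'g \<Rightarrow> 'g"
  assumes groupoid: "groupoid G m i"
begin

abbreviation r where "r \<equiv> gr_r m i"
abbreviation d where "d \<equiv> gr_d m i"
abbreviation G0 where "G0 \<equiv> gr_ids G m i"

lemma inv_closed: "g \<in> G \<Longrightarrow> i g \<in> G"
  and inv_inv: "g \<in> G \<Longrightarrow> i (i g) = g"
  using groupoid unfolding groupoid_def by blast+

lemma mul_closed: "g \<in> G \<Longrightarrow> h \<in> G \<Longrightarrow> d g = r h \<Longrightarrow> m g h \<in> G"
  and r_mul: "g \<in> G \<Longrightarrow> h \<in> G \<Longrightarrow> d g = r h \<Longrightarrow> r (m g h) = r g"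
  and d_mul: "g \<in> G \<Longrightarrow> h \<in> G \<Longrightarrow> d g = r h \<Longrightarrow> d (m g h) = d h"
  using groupoid unfolding groupoid_def by blast+

lemma mul_assoc:
  "g \<in> G \<Longrightarrow> h \<in> G \<Longrightarrow> k \<in> G \<Longrightarrow> d g = r h \<Longrightarrow> d h = r k \<Longrightarrow> m (m g h) k = m g (m h k)"
  using groupoid unfolding groupoid_def by blast

lemma r_mul_left: "g \<in> G \<Longrightarrow> m (r g) g = g"
  using groupoid unfolding groupoid_def by blast

lemma d_mul_right: "g \<in> G \<Longrightarrow> m g (d g) = g"
  using groupoid unfolding groupoid_def by blast

lemma r_r: "g \<in> G \<Longrightarrow> r (r g) = r g"
  using groupoid unfolding groupoid_def by blast

lemma r_inv: "g \<in> G \<Longrightarrow> r (i g) = d g"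
  and d_inv: "g \<in> G \<Longrightarrow> d (i g) = r g"
  by (simp_all add: gr_r_def gr_d_def inv_inv)

lemma r_in_ids: "g \<in> G \<Longrightarrow> r g \<in> G0"
  unfolding gr_ids_def by blast

lemma ids_subset: "G0 \<subseteq> G"
  using mul_closed[of g "i g" for g] inv_closed r_inv
  unfolding gr_ids_def by (auto simp: gr_r_def)

lemma ids_r_eq: "e \<in> G0 \<Longrightarrow> r e = e"
  unfolding gr_ids_def using r_r by auto

lemma inv_mul_cancel_left: "g \<in> G \<Longrightarrow> h \<in> G \<Longrightarrow> d g = r h \<Longrightarrow> m (i g) (m g h) = h"
proof -
  assume g: "g \<in> G" and h: "h \<in> G" and gh: "d g = r h"
  have "m (i g) (m g h) = m (m (i g) g) h"
    using mul_assoc[of "i g" g h] g h gh inv_closed d_inv by simp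
  then show ?thesis
    using r_mul_left[OF h] gh by (simp add: gr_d_def)
qed

lemma mul_in_ids_imp_eq_inv:
  assumes g: "g \<in> G" and h: "h \<in> G" and gh: "d g = r h" and "m g h \<in> G0"
  shows "h = i g"
proof -
  have "m g h = r g"
    using ids_r_eq[OF \<open>m g h \<in> G0\<close>] r_mul[OF g h gh] by simp
  then have "h = m (i g) (r g)"
    using inv_mul_cancel_left[OF g h gh] by simp
  then show ?thesis
    using d_mul_right[OF inv_closed[OF g]] d_inv[OF g] by simp
qed

lemma subgroupoid_left_mul_bij:
  assumes L: "subgroupoid L G m i" and h: "h \<in> L"
  shows "bij_betw (m h) {l \<in> L. r l = d h} {l \<in> L. r l = r h}"
proof (rule bij_betw_byWitness[where f' = "m (i h)"])
  have LG: "L \<subseteq> G" and L_inv: "\<And>l. l \<in> L \<Longrightarrow> i l \<in> L"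
    and L_mul: "\<And>g l. g \<in> L \<Longrightarrow> l \<in> L \<Longrightarrow> d g = r l \<Longrightarrow> m g l \<in> L"
    using L unfolding subgroupoid_def by blast+
  have hG: "h \<in> G" and ihG: "i h \<in> G"
    using h LG inv_closed by auto
  show "\<forall>l \<in> {l \<in> L. r l = d h}. m (i h) (m h l) = l"
    using inv_mul_cancel_left hG LG by auto
  show "\<forall>l \<in> {l \<in> L. r l = r h}. m h (m (i h) l) = l"
    using inv_mul_cancel_left[OF ihG] inv_inv[OF hG] d_inv[OF hG] LG by auto
  show "m h ` {l \<in> L. r l = d h} \<subseteq> {l \<in> L. r l = r h}"
    using L_mul[OF h] r_mul[OF hG] LG by auto
  show "m (i h) ` {l \<in> L. r l = r h} \<subseteq> {l \<in> L. r l = d h}"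
    using L_mul[OF L_inv[OF h]] r_mul[OF ihG] d_inv[OF hG] r_inv[OF hG] LG by auto
qed

end

locale groupoid_action = groupoid_carrier G m i
  for G :: "'g set" and m :: "'g \<Rightarrow> 'g \<Rightarrow> 'g" and i :: "'g \<Rightarrow> 'g" +
  fixes E :: "'g \<Rightarrow> 'r::ring_1 set" and u :: "'g \<Rightarrow> 'r" and \<beta> :: "'g \<Rightarrow> 'r \<Rightarrow> 'r"
  assumes action: "unital_action G m i E u \<beta>"
begin

lemma E_r: "g \<in> G \<Longrightarrow> E g = E (r g)"
  and ideal_E: "g \<in> G \<Longrightarrow> two_sided_ideal (E g)"
  and unit_E: "g \<in> G \<Longrightarrow> is_unit_of (u g) (E g)"
  and beta_iso: "g \<in> G \<Longrightarrow> ring_iso_betw (\<beta> g) (E (i g)) (E g)"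
  and beta_mul: "g \<in> G \<Longrightarrow> h \<in> G \<Longrightarrow> d g = r h \<Longrightarrow> x \<in> E (i h) \<Longrightarrow> \<beta> g (\<beta> h x) = \<beta> (m g h) x"
  and ids_decomp: "\<exists>!f. (\<forall>e\<in>G0. f e \<in> E e) \<and> (\<forall>e. e \<notin> G0 \<longrightarrow> f e = 0) \<and> x = (\<Sum>e\<in>G0. f e)"
  using action unfolding unital_action_def by blast+

lemma zero_in_E: "g \<in> G \<Longrightarrow> 0 \<in> E g"
  and add_in_E: "g \<in> G \<Longrightarrow> x \<in> E g \<Longrightarrow> y \<in> E g \<Longrightarrow> x + y \<in> E g"
  and mult_left_in_E: "g \<in> G \<Longrightarrow> x \<in> E g \<Longrightarrow> a * x \<in> E g"
  and mult_right_in_E: "g \<in> G \<Longrightarrow> x \<in> E g \<Longrightarrow> x * a \<in> E g"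
  using ideal_E unfolding two_sided_ideal_def by blast+

lemma u_in_E: "g \<in> G \<Longrightarrow> u g \<in> E g"
  and u_mult_left: "g \<in> G \<Longrightarrow> x \<in> E g \<Longrightarrow> u g * x = x"
  and u_mult_right: "g \<in> G \<Longrightarrow> x \<in> E g \<Longrightarrow> x * u g = x"
  using unit_E unfolding is_unit_of_def by blast+

lemma beta_in_E: "g \<in> G \<Longrightarrow> x \<in> E (i g) \<Longrightarrow> \<beta> g x \<in> E g"
  and beta_add: "g \<in> G \<Longrightarrow> x \<in> E (i g) \<Longrightarrow> y \<in> E (i g) \<Longrightarrow> \<beta> g (x + y) = \<beta> g x + \<beta> g y"
  using beta_iso unfolding ring_iso_betw_def bij_betw_def by blast+

lemma u_r: "g \<in> G \<Longrightarrow> u (r g) = u g"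
proof -
  assume g: "g \<in> G"
  have rg: "r g \<in> G"
    using ids_subset r_in_ids[OF g] by blast
  have "u (r g) = u (r g) * u g"
    using u_mult_right[OF g] u_in_E[OF rg] E_r[OF g] by simp
  also have "\<dots> = u g"
    using u_mult_left[OF rg] u_in_E[OF g] E_r[OF g] by simp
  finally show ?thesis .
qed

lemma u_inv: "g \<in> G \<Longrightarrow> u (i g) = u (d g)"
  using u_r[of "i g"] inv_closed r_inv by simp

lemma u_inv_mul: "g \<in> G \<Longrightarrow> h \<in> G \<Longrightarrow> d g = r h \<Longrightarrow> u (i (m g h)) = u (i h)"
  using u_inv[OF mul_closed] u_inv d_mul by simp

lemma ids_E_inter_zero:
  assumes e: "e \<in> G0" and f: "f \<in> G0" and "e \<noteq> f" and "x \<in> E e" and "x \<in> E f"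
  shows "x = 0"
proof (cases "finite G0")
  case False
  \<comment> \<open>every sum over an infinite index set is 0, so the decomposition forces x = 0\<close>
  then show ?thesis
    using ids_decomp[of x] by auto
next
  case fin: True
  define at :: "'g \<Rightarrow> 'g \<Rightarrow> 'r" where "at k = (\<lambda>c. if c = k then x else 0)" for k
  have "(\<forall>c\<in>G0. at k c \<in> E c) \<and> (\<forall>c. c \<notin> G0 \<longrightarrow> at k c = 0) \<and> x = (\<Sum>c\<in>G0. at k c)"
    if "k \<in> G0" "x \<in> E k" for k
    using that ids_subset zero_in_E fin unfolding at_def by (auto simp: sum.delta)
  then have "at e = at f"
    using ids_decomp[of x] assms by blast
  then show ?thesis
    using \<open>e \<noteq> f\<close> fun_cong[of "at e" "at f" e] unfolding at_def by simp
qed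

lemma mult_unit_ids:
  assumes e: "e \<in> G0" and g: "g \<in> G" and x: "x \<in> E e"
  shows "x * u g = (if e = r g then x else 0)"
proof (cases "e = r g")
  case True
  then show ?thesis
    using u_mult_right[OF g] x E_r[OF g] by simp
next
  case False
  have "x * u g \<in> E e" and "x * u g \<in> E (r g)"
    using mult_right_in_E[of e x] mult_left_in_E[OF g u_in_E[OF g]] e ids_subset x E_r[OF g]
    by auto
  then show ?thesis
    using ids_E_inter_zero[OF e r_in_ids[OF g] False] False by simp
qed

lemma unit_ids_mult:
  assumes e: "e \<in> G0" and g: "g \<in> G" and x: "x \<in> E g"
  shows "u e * x = (if e = r g then x else 0)"
proof (cases "e = r g")
  case True
  then show ?thesis
    using u_mult_left[OF g] x u_r[OF g] by simp
next
  case False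
  have "u e * x \<in> E e" and "u e * x \<in> E (r g)"
    using mult_right_in_E[of e "u e"] mult_left_in_E[OF g x] u_in_E e ids_subset E_r[OF g]
    by auto
  then show ?thesis
    using ids_E_inter_zero[OF e r_in_ids[OF g] False] False by simp
qed

lemma restrict_unit_in_E: "g \<in> G \<Longrightarrow> y * u g \<in> E g"
  using mult_left_in_E u_in_E by blast

lemma beta_zero: "g \<in> G \<Longrightarrow> \<beta> g 0 = 0"
  using beta_add[of g 0 0] zero_in_E inv_closed by simp

lemma sum_in_E: "finite A \<Longrightarrow> g \<in> G \<Longrightarrow> (\<And>a. a \<in> A \<Longrightarrow> f a \<in> E g) \<Longrightarrow> sum f A \<in> E g"
  by (induction A rule: finite_induct) (auto simp: zero_in_E add_in_E)

lemma beta_sum: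
  "finite A \<Longrightarrow> g \<in> G \<Longrightarrow> (\<And>a. a \<in> A \<Longrightarrow> f a \<in> E (i g)) \<Longrightarrow>
    \<beta> g (sum f A) = (\<Sum>a\<in>A. \<beta> g (f a))"
  by (induction A rule: finite_induct)
    (auto simp: beta_zero beta_add sum_in_E inv_closed)

lemma beta_mult_unit_inv:
  assumes g: "g \<in> G" and h: "h \<in> G" and x: "x \<in> E (i h)"
  shows "\<beta> g (\<beta> h x * u (i g)) = (if r h = d g then \<beta> (m g h) x else 0)"
proof -
  have "\<beta> h x * u (i g) = (if r h = d g then \<beta> h x else 0)"
    using mult_unit_ids[OF r_in_ids[OF h] inv_closed[OF g]] beta_in_E[OF h x] E_r[OF h] r_inv[OF g]
    by simp
  then show ?thesis
    using beta_mul[OF g h _ x] beta_zero[OF g] by auto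
qed

lemma J_set_nonzero_imp_unit_nonzero: "g \<in> G \<Longrightarrow> J_set E i u \<beta> g \<noteq> {0} \<Longrightarrow> u g \<noteq> 0"
  using u_mult_left zero_in_E unfolding J_set_def by force

end

locale finite_groupoid_action = groupoid_action +
  assumes finite_carrier: "finite G"
begin

definition trace where
  "trace L y = (\<Sum>l\<in>L. \<beta> l (y * u (i l)))"

lemma trace_twisted:
  assumes g: "g \<in> G" and LG: "L \<subseteq> G"
  shows "\<beta> g (trace L y * u (i g)) =
    (\<Sum>l\<in>L. if r l = d g then \<beta> (m g l) (y * u (i (m g l))) else 0)"
proof -
  have fin: "finite L"
    using LG finite_carrier finite_subset by blast
  have "\<beta> g (trace L y * u (i g)) = (\<Sum>l\<in>L. \<beta> g (\<beta> l (y * u (i l)) * u (i g)))"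
    unfolding trace_def sum_distrib_right
    using beta_sum[OF fin g] restrict_unit_in_E inv_closed[OF g] by simp
  also have "\<dots> = (\<Sum>l\<in>L. if r l = d g then \<beta> (m g l) (y * u (i (m g l))) else 0)"
    using beta_mult_unit_inv[OF g] restrict_unit_in_E inv_closed u_inv_mul[OF g] LG
    by (intro sum.cong) auto
  finally show ?thesis .
qed

lemma trace_in_fixed_ring:
  assumes L: "subgroupoid L G m i"
  shows "trace L y \<in> fixed_ring L i u \<beta>"
  unfolding fixed_ring_def
proof (intro CollectI ballI)
  fix h assume h: "h \<in> L"
  have LG: "L \<subseteq> G"
    using L unfolding subgroupoid_def by blast
  then have hG: "h \<in> G" and fin: "finite L"
    using h finite_carrier finite_subset by auto
  let ?\<phi> = "\<lambda>l. \<beta> l (y * u (i l))"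
  have "\<beta> h (trace L y * u (i h)) = (\<Sum>l\<in>L. if r l = d h then ?\<phi> (m h l) else 0)"
    using trace_twisted[OF hG LG] .
  also have "\<dots> = (\<Sum>l\<in>{l \<in> L. r l = d h}. ?\<phi> (m h l))"
    by (rule sum.inter_filter[OF fin, symmetric])
  also have "\<dots> = (\<Sum>l\<in>{l \<in> L. r l = r h}. ?\<phi> l)"
    using sum.reindex_bij_betw[OF subgroupoid_left_mul_bij[OF L h]] .
  also have "\<dots> = (\<Sum>l\<in>L. if r l = r h then ?\<phi> l else 0)"
    by (rule sum.inter_filter[OF fin])
  also have "\<dots> = (\<Sum>l\<in>L. ?\<phi> l * u h)"
  proof (rule sum.cong[OF refl])
    fix l assume "l \<in> L"
    then have l: "l \<in> G"
      using LG by blast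
    have "?\<phi> l \<in> E (r l)"
      using beta_in_E[OF l restrict_unit_in_E[OF inv_closed[OF l]]] E_r[OF l] by simp
    then show "(if r l = r h then ?\<phi> l else 0) = ?\<phi> l * u h"
      using mult_unit_ids[OF r_in_ids[OF l] hG] by simp
  qed
  also have "\<dots> = trace L y * u h"
    unfolding trace_def by (simp add: sum_distrib_right)
  finally show "\<beta> h (trace L y * u (i h)) = trace L y * u h" .
qed

lemma sum_units_mult:
  assumes g: "g \<in> G" and x: "x \<in> E g"
  shows "(\<Sum>e\<in>G0. u e) * x = x"
proof -
  have "finite G0"
    using finite_carrier unfolding gr_ids_def by simp
  then show ?thesis
    using unit_ids_mult[OF _ g x] r_in_ids[OF g] by (simp add: sum_distrib_right)
qed

end

locale galois_coordinates = finite_groupoid_action G m i E u \<beta>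
  for G :: "'g set" and m i and E :: "'g \<Rightarrow> 'r::ring_1 set" and u \<beta> +
  fixes n :: nat and xs ys :: "nat \<Rightarrow> 'r"
  assumes coords:
    "g \<in> G \<Longrightarrow> (\<Sum>k<n. xs k * \<beta> g (ys k * u (i g))) = (if g \<in> G0 then u g else 0)"
begin

lemma coords_trace_twisted_eq_zero:
  assumes L: "subgroupoid L G m i" and g: "g \<in> G" and "i g \<notin> L"
  shows "(\<Sum>k<n. xs k * \<beta> g (trace L (ys k) * u (i g))) = 0"
proof -
  have LG: "L \<subseteq> G"
    using L unfolding subgroupoid_def by blast
  have "(\<Sum>k<n. xs k * \<beta> g (trace L (ys k) * u (i g))) =
    (\<Sum>l\<in>L. if r l = d g then \<Sum>k<n. xs k * \<beta> (m g l) (ys k * u (i (m g l))) else 0)"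
    using trace_twisted[OF g LG]
    by (auto simp: sum_distrib_left sum.swap[where A = "{..<n}"] intro!: sum.cong)
  also have "\<dots> = 0"
  proof (rule sum.neutral, intro ballI)
    fix l assume "l \<in> L"
    have "m g l \<notin> G0" if "r l = d g"
      using mul_in_ids_imp_eq_inv[OF g _ that[symmetric]] \<open>l \<in> L\<close> \<open>i g \<notin> L\<close> LG by blast
    then show "(if r l = d g then \<Sum>k<n. xs k * \<beta> (m g l) (ys k * u (i (m g l))) else 0) = 0"
      using coords[OF mul_closed[OF g]] \<open>l \<in> L\<close> LG by auto
  qed
  finally show ?thesis .
qed

lemma coords_trace_eq_sum_units:
  assumes L: "wide_subgroupoid L G m i"
  shows "(\<Sum>k<n. xs k * trace L (ys k)) = (\<Sum>e\<in>G0. u e)"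
proof -
  have LG: "L \<subseteq> G" and G0L: "G0 \<subseteq> L"
    using L unfolding wide_subgroupoid_def subgroupoid_def by blast+
  have fin: "finite L"
    using LG finite_carrier finite_subset by blast
  have "(\<Sum>k<n. xs k * trace L (ys k)) = (\<Sum>l\<in>L. \<Sum>k<n. xs k * \<beta> l (ys k * u (i l)))"
    unfolding trace_def by (simp add: sum_distrib_left sum.swap[where A = "{..<n}"])
  also have "\<dots> = (\<Sum>l\<in>L. if l \<in> G0 then u l else 0)"
    using coords LG by (intro sum.cong) auto
  also have "\<dots> = (\<Sum>e\<in>{l \<in> L. l \<in> G0}. u e)"
    by (rule sum.inter_filter[OF fin, symmetric])
  also have "{l \<in> L. l \<in> G0} = G0"
    using G0L by blast
  finally show ?thesis .
qed

lemma subgroupoid_subset_of_fixed_ring_subset: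
  assumes H: "subgroupoid H G m i" and L: "wide_subgroupoid L G m i"
    and units: "\<forall>h\<in>H. u h \<noteq> 0"
    and fixed: "fixed_ring L i u \<beta> \<subseteq> fixed_ring H i u \<beta>"
  shows "H \<subseteq> L"
proof
  fix g assume gH: "g \<in> H"
  then have g: "g \<in> G"
    using H unfolding subgroupoid_def by blast
  show "g \<in> L"
  proof (rule ccontr)
    assume "g \<notin> L"
    have L_sub: "subgroupoid L G m i"
      using L unfolding wide_subgroupoid_def by blast
    then have "i g \<notin> L"
      using \<open>g \<notin> L\<close> inv_inv[OF g] unfolding subgroupoid_def by metis
    have fix_g: "\<beta> g (trace L y * u (i g)) = trace L y * u g" for y
      using trace_in_fixed_ring[OF L_sub] fixed gH unfolding fixed_ring_def by blast
    have "u g = (\<Sum>e\<in>G0. u e) * u g"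
      using sum_units_mult[OF g u_in_E[OF g]] by simp
    also have "\<dots> = (\<Sum>k<n. xs k * trace L (ys k)) * u g"
      using coords_trace_eq_sum_units[OF L] by simp
    also have "\<dots> = (\<Sum>k<n. xs k * \<beta> g (trace L (ys k) * u (i g)))"
      by (simp add: fix_g sum_distrib_right mult.assoc)
    also have "\<dots> = 0"
      using coords_trace_twisted_eq_zero[OF L_sub g \<open>i g \<notin> L\<close>] .
    finally show False
      using units gH by blast
  qed
qed

end

theorem lemma3p2:
  fixes G H L :: "'g set" and m :: "'g \<Rightarrow> 'g \<Rightarrow> 'g" and i :: "'g \<Rightarrow> 'g"
    and E :: "'g \<Rightarrow> 'r::ring_1 set" and u :: "'g \<Rightarrow> 'r" and \<beta> :: "'g \<Rightarrow> 'r \<Rightarrow> 'r"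
  assumes "groupoid G m i" and "finite G"
    and "unital_action G m i E u \<beta>"
    and "galois_ext G m i u \<beta>"
    and "wide_subgroupoid H G m i" and "wide_subgroupoid L G m i"
    and "\<forall>h\<in>H. J_set E i u \<beta> h \<noteq> {0}"
    and "\<forall>l\<in>L. J_set E i u \<beta> l \<noteq> {0}"
    and "fixed_ring H i u \<beta> = fixed_ring L i u \<beta>"
  shows "H = L"
proof -
  obtain n :: nat and xs ys where "\<forall>g\<in>G. (\<Sum>k<n. xs k * \<beta> g (ys k * u (i g))) =
      (if g \<in> gr_ids G m i then u g else 0)"
    using assms(4) unfolding galois_ext_def by blast
  then interpret galois_coordinates G m i E u \<beta> n xs ys
    using assms(1-3) by unfold_locales auto
  have "subgroupoid H G m i" and "subgroupoid L G m i"
    using assms(5,6) unfolding wide_subgroupoid_def by blast+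
  moreover have "\<forall>h\<in>H. u h \<noteq> 0" and "\<forall>l\<in>L. u l \<noteq> 0"
    using assms(7,8) J_set_nonzero_imp_unit_nonzero \<open>subgroupoid H G m i\<close> \<open>subgroupoid L G m i\<close>
    unfolding subgroupoid_def by blast+
  ultimately have "H \<subseteq> L" and "L \<subseteq> H"
    using subgroupoid_subset_of_fixed_ring_subset assms(5,6,9) by auto
  then show ?thesis
    by blast
qed

end
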